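(* Let $0\le\beta<1$. There is a constant $C=C(\beta)>0$ such that for every $w\in L^2(0,T;H^{-1}(\Omega))$ and $t\in(0,T)$, $$\Big\|\partial_t^\beta\int_0^te^{-(t-s)A}w(s)\,ds\Big\|_{H^{-1}(\Omega)}\le C\int_0^t(t-s)^{-\beta}\|w(s)\|_{H^{-1}(\Omega)}\,ds,$$ where for $\beta=0$, $\partial_t^0$ denotes the identity.
   Context: $\Omega\subset\mathbb{R}^d$ bounded smooth domain; $A=-\sum_{i,j}\partial_{x_i}(a_{ij}\partial_{x_j}\cdot)$ symmetric uniformly elliptic with $a_{ij}\in C^1(\overline\Omega)$ and homogeneous Dirichlet condition; $(\lambda_k,\varphi_k)$ its eigenpairs, $\{\varphi_k\}$ orthonormal basis of $L^2(\Omega)$, $\lambda_k>0$; $\langle\cdot,\cdot\rangle$ the $H^{-1}$–$H_0^1$ pairing; $e^{-tA}g=\sum_ke^{-\lambda_kt}\langle g,\varphi_k\rangle\varphi_k$. $\partial_t^\beta$ is the Caputo derivative $\partial_t^\beta\varphi(t)=\frac{1}{\Gamma(1-\beta)}\int_0^t(t-\tau)^{-\beta}\partial_\tau\varphi(\tau)d\tau$. The $H^{-1}$ norm is $\|g\|_{H^{-1}(\Omega)}=\big(\sum_k\lambda_k^{-1}|\langle g,\varphi_k\rangle|^2\big)^{1/2}$ and $\|\psi\|_{H_0^1(\Omega)}=\big(\sum_k\lambda_k|(\psi,\varphi_k)|^2\big)^{1/2}$. *)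

theory Defs
  imports "HOL-Analysis.Analysis"
begin

text \<open>Spectral (coefficient) model. An element g of H^{-1}(Omega) is represented by its
  coefficient sequence k \<mapsto> <g, phi_k>; lam k are the Dirichlet eigenvalues of A.\<close>

definition Hm1_norm :: "(nat \<Rightarrow> real) \<Rightarrow> (nat \<Rightarrow> real) \<Rightarrow> ennreal" where
  "Hm1_norm lam g =
     (if summable (\<lambda>k. (g k)\<^sup>2 / lam k) then ennreal (sqrt (\<Sum>k. (g k)\<^sup>2 / lam k)) else \<infinity>)"

definition L2_Hm1 :: "real \<Rightarrow> (nat \<Rightarrow> real) \<Rightarrow> (real \<Rightarrow> nat \<Rightarrow> real) \<Rightarrow> bool" where
  "L2_Hm1 T lam w \<longleftrightarrow>
     (\<forall>k. (\<lambda>s. w s k) \<in> borel_measurable (lebesgue_on {0<..<T})) \<and>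
     (\<integral>\<^sup>+ s\<in>{0<..<T}. (Hm1_norm lam (w s))\<^sup>2 \<partial>lebesgue) < \<infinity>"

definition heat_conv :: "(nat \<Rightarrow> real) \<Rightarrow> (real \<Rightarrow> nat \<Rightarrow> real) \<Rightarrow> real \<Rightarrow> nat \<Rightarrow> real" where
  "heat_conv lam w t = (\<lambda>k. LINT s:{0..t}|lebesgue. exp (- lam k * (t - s)) * w s k)"

definition caputo :: "real \<Rightarrow> (real \<Rightarrow> real) \<Rightarrow> real \<Rightarrow> real" where
  "caputo \<beta> f t =
     (if \<beta> = 0 then f t
      else (1 / Gamma (1 - \<beta>)) * (LINT \<tau>:{0..t}|lebesgue. (t - \<tau>) powr (- \<beta>) * deriv f \<tau>))"

definition caputo_vec :: "real \<Rightarrow> (real \<Rightarrow> nat \<Rightarrow> real) \<Rightarrow> real \<Rightarrow> nat \<Rightarrow> real" where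
  "caputo_vec \<beta> u t = (\<lambda>k. caputo \<beta> (\<lambda>\<tau>. u \<tau> k) t)"

end

(*
  For a single eigenvalue lam the coefficient f(tau) = int_0^tau exp(-lam (tau - s)) u(s) ds
  satisfies f' = u - lam f almost everywhere, so the Caputo derivative of f at t is bounded by
  Gamma(1 - beta)^-1 int_0^t (t - tau)^-beta (|u(tau)| + lam |f(tau)|) dtau.  After Tonelli the
  second term is controlled by the kernel estimate
    int_s^t lam (t - tau)^-beta exp(-lam (tau - s)) dtau <= 2^beta (1 + 1/(1 - beta)) (t - s)^-beta,
  which is uniform in lam.  The resulting coefficientwise bound is therefore uniform in k, and
  Minkowski's integral inequality for the weighted l2 norm defining H^-1 lifts it to the
  vector-valued estimate.
*)

theory Submission
  imports Defs "HOL-Real_Asymp.Real_Asymp"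
begin

lemma Hm1_norm_eq_SUP_L2_set:
  assumes lam: "\<And>k. 0 < lam k"
  shows "Hm1_norm lam g = (SUP N. ennreal (L2_set (\<lambda>k. g k / sqrt (lam k)) {..<N}))"
proof -
  define a where "a = (\<lambda>k. (g k)\<^sup>2 / lam k)"
  have Hm1_eq: "Hm1_norm lam g = (if summable a then ennreal (sqrt (suminf a)) else \<infinity>)"
    by (simp add: Hm1_norm_def a_def)
  have a_nonneg: "0 \<le> a k" for k
    using lam[of k] by (simp add: a_def)
  have L2_eq: "L2_set (\<lambda>k. g k / sqrt (lam k)) {..<N} = sqrt (\<Sum>k<N. a k)" for N
    unfolding L2_set_def a_def using lam by (simp add: power_divide less_imp_le)
  have inc: "incseq (\<lambda>N. ennreal (sqrt (\<Sum>k<N. a k)))"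
    by (intro monoI ennreal_leI real_sqrt_le_mono sum_mono2) (auto simp: a_nonneg)
  show ?thesis
  proof (cases "summable a")
    case True
    have "(\<lambda>N. ennreal (sqrt (\<Sum>k<N. a k))) \<longlonglongrightarrow> ennreal (sqrt (suminf a))"
      by (intro tendsto_ennrealI tendsto_real_sqrt summable_LIMSEQ True)
    then have "ennreal (sqrt (suminf a)) = (SUP N. ennreal (sqrt (\<Sum>k<N. a k)))"
      using LIMSEQ_SUP[OF inc] by (rule LIMSEQ_unique)
    then show ?thesis
      using True by (simp add: Hm1_eq L2_eq)
  next
    case False
    have B: "ennreal B \<le> (SUP N. ennreal (sqrt (\<Sum>k<N. a k)))" for B
    proof -
      obtain N where "B\<^sup>2 < (\<Sum>k<N. a k)"
        using False summableI_nonneg_bounded[of a "B\<^sup>2"] a_nonneg by (meson not_le)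
      then have "B \<le> sqrt (\<Sum>k<N. a k)"
        by (meson less_imp_le real_le_rsqrt real_sqrt_le_iff order_trans abs_ge_self real_sqrt_abs)
      then show ?thesis
        by (intro SUP_upper2[of N] ennreal_leI) auto
    qed
    have "top = (SUP N. ennreal (sqrt (\<Sum>k<N. a k)))"
    proof (cases "(SUP N. ennreal (sqrt (\<Sum>k<N. a k)))" rule: ennreal_cases)
      case (real r)
      then show ?thesis
        using B[of "r + 1"] by simp
    qed (erule sym)
    then show ?thesis
      using False unfolding Hm1_eq L2_eq infinity_ennreal_def by (simp only: if_False)
  qed
qed

lemma L2_set_le_nn_integral_L2_set:
  fixes y :: "'a \<Rightarrow> 'b \<Rightarrow> real" and i :: "'b \<Rightarrow> real"
  assumes A: "finite A"
    and meas: "\<And>k. k \<in> A \<Longrightarrow> (\<lambda>s. y s k) \<in> borel_measurable M"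
    and nonneg: "\<And>s k. k \<in> A \<Longrightarrow> 0 \<le> y s k"
    and le: "\<And>k. k \<in> A \<Longrightarrow> ennreal \<bar>i k\<bar> \<le> (\<integral>\<^sup>+ s. y s k \<partial>M)"
  shows "ennreal (L2_set i A) \<le> (\<integral>\<^sup>+ s. L2_set (y s) A \<partial>M)"
proof (cases "\<integral>\<^sup>+ s. L2_set (y s) A \<partial>M" rule: ennreal_cases)
  case (real R)
  \<comment> \<open>Dual form of Minkowski's inequality: pair the vector of integrals with i itself and apply
      Cauchy-Schwarz under the integral.\<close>
  have L2_meas: "(\<lambda>s. L2_set (y s) A) \<in> borel_measurable M"
    unfolding L2_set_def by (intro measurable_compose[OF _ borel_measurable_sqrt] borel_measurable_sum
        borel_measurable_power meas)
  have "ennreal ((L2_set i A)\<^sup>2) = (\<Sum>k\<in>A. ennreal \<bar>i k\<bar> * ennreal \<bar>i k\<bar>)"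
    using A by (simp add: L2_set_def sum_nonneg ennreal_mult'[symmetric] power2_eq_square)
  also have "\<dots> \<le> (\<Sum>k\<in>A. ennreal \<bar>i k\<bar> * (\<integral>\<^sup>+ s. y s k \<partial>M))"
    by (intro sum_mono mult_left_mono le) auto
  also have "\<dots> = (\<Sum>k\<in>A. \<integral>\<^sup>+ s. ennreal (\<bar>i k\<bar> * y s k) \<partial>M)"
    by (intro sum.cong refl) (simp add: nn_integral_cmult meas nonneg ennreal_mult)
  also have "\<dots> = (\<integral>\<^sup>+ s. (\<Sum>k\<in>A. ennreal (\<bar>i k\<bar> * y s k)) \<partial>M)"
    by (rule nn_integral_sum[symmetric]) (use meas in measurable)
  also have "\<dots> = (\<integral>\<^sup>+ s. ennreal (\<Sum>k\<in>A. \<bar>i k\<bar> * y s k) \<partial>M)"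
    by (intro nn_integral_cong sum_ennreal) (simp add: nonneg)
  also have "\<dots> \<le> (\<integral>\<^sup>+ s. ennreal (L2_set i A) * L2_set (y s) A \<partial>M)"
  proof (intro nn_integral_mono)
    fix s
    have "(\<Sum>k\<in>A. \<bar>i k\<bar> * y s k) \<le> L2_set i A * L2_set (y s) A"
      using L2_set_mult_ineq[of i "y s" A] nonneg by simp
    then show "ennreal (\<Sum>k\<in>A. \<bar>i k\<bar> * y s k) \<le> ennreal (L2_set i A) * L2_set (y s) A"
      by (simp add: ennreal_mult[symmetric] ennreal_leI)
  qed
  also have "\<dots> = ennreal (L2_set i A * R)"
    using L2_meas real by (simp add: nn_integral_cmult ennreal_mult)
  finally have "L2_set i A * L2_set i A \<le> L2_set i A * R"
    using real by (simp add: power2_eq_square)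
  then have "L2_set i A \<le> R"
    using real L2_set_nonneg[of i A] by (cases "L2_set i A = 0") (auto simp: mult_le_cancel_left_pos)
  then show ?thesis
    using real by (simp add: ennreal_leI)
qed simp

lemma Hm1_norm_le_nn_integral:
  fixes x :: "'a \<Rightarrow> nat \<Rightarrow> real" and c :: "nat \<Rightarrow> real" and \<rho> :: "'a \<Rightarrow> real"
  assumes lam: "\<And>k. 0 < lam k" and C: "0 < C"
    and meas: "\<And>k. (\<lambda>s. x s k) \<in> borel_measurable M" and \<rho>_meas: "\<rho> \<in> borel_measurable M"
    and \<rho>_nonneg: "\<And>s. 0 \<le> \<rho> s"
    and bound: "\<And>k. ennreal \<bar>c k\<bar> \<le> ennreal C * (\<integral>\<^sup>+ s. ennreal (\<rho> s) * ennreal \<bar>x s k\<bar> \<partial>M)"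
  shows "Hm1_norm lam c \<le> ennreal C * (\<integral>\<^sup>+ s. ennreal (\<rho> s) * Hm1_norm lam (x s) \<partial>M)"
proof -
  note [measurable] = meas \<rho>_meas
  define y where "y s k = \<rho> s * \<bar>x s k\<bar> / sqrt (lam k)" for s k
  have y_nonneg: "0 \<le> y s k" for s k
    using \<rho>_nonneg[of s] lam[of k] by (simp add: y_def)
  have coeff_le: "ennreal \<bar>c k / (C * sqrt (lam k))\<bar> \<le> (\<integral>\<^sup>+ s. y s k \<partial>M)" for k
  proof -
    have "ennreal \<bar>c k / (C * sqrt (lam k))\<bar> = ennreal (1 / (C * sqrt (lam k))) * ennreal \<bar>c k\<bar>"
      using C lam[of k] by (simp add: ennreal_mult[symmetric])
    also have "\<dots> \<le> ennreal (1 / (C * sqrt (lam k))) * (ennreal C * (\<integral>\<^sup>+ s. ennreal (\<rho> s) * ennreal \<bar>x s k\<bar> \<partial>M))"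
      by (intro mult_left_mono bound) auto
    also have "\<dots> = ennreal (1 / sqrt (lam k)) * (\<integral>\<^sup>+ s. ennreal (\<rho> s) * ennreal \<bar>x s k\<bar> \<partial>M)"
      using C lam[of k] by (simp add: mult.assoc[symmetric] ennreal_mult[symmetric])
    also have "\<dots> = (\<integral>\<^sup>+ s. ennreal (1 / sqrt (lam k)) * (ennreal (\<rho> s) * ennreal \<bar>x s k\<bar>) \<partial>M)"
      by (intro nn_integral_cmult[symmetric]) measurable
    also have "\<dots> = (\<integral>\<^sup>+ s. y s k \<partial>M)"
      using \<rho>_nonneg lam[of k] by (intro nn_integral_cong) (simp add: y_def ennreal_mult[symmetric])
    finally show ?thesis .
  qed
  have "ennreal (L2_set (\<lambda>k. c k / sqrt (lam k)) {..<N})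
      \<le> ennreal C * (\<integral>\<^sup>+ s. ennreal (\<rho> s) * Hm1_norm lam (x s) \<partial>M)" for N
  proof -
    have "ennreal (L2_set (\<lambda>k. c k / sqrt (lam k)) {..<N})
        = ennreal C * ennreal (L2_set (\<lambda>k. c k / (C * sqrt (lam k))) {..<N})"
      using C by (simp add: ennreal_mult[symmetric] L2_set_right_distrib)
    also have "\<dots> \<le> ennreal C * (\<integral>\<^sup>+ s. L2_set (y s) {..<N} \<partial>M)"
      by (intro mult_left_mono L2_set_le_nn_integral_L2_set coeff_le y_nonneg)
        (auto simp: y_def meas \<rho>_meas)
    also have "\<dots> \<le> ennreal C * (\<integral>\<^sup>+ s. ennreal (\<rho> s) * Hm1_norm lam (x s) \<partial>M)"
    proof (intro mult_left_mono nn_integral_mono)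
      fix s
      have "L2_set (y s) {..<N} = L2_set (\<lambda>k. \<rho> s * (x s k / sqrt (lam k))) {..<N}"
        unfolding L2_set_def y_def by (simp add: power_mult_distrib power_divide)
      also have "\<dots> = \<rho> s * L2_set (\<lambda>k. x s k / sqrt (lam k)) {..<N}"
        by (rule L2_set_right_distrib[symmetric]) (rule \<rho>_nonneg)
      also have "ennreal \<dots> \<le> ennreal (\<rho> s) * Hm1_norm lam (x s)"
        unfolding Hm1_norm_eq_SUP_L2_set[OF lam] using \<rho>_nonneg[of s]
        by (simp add: ennreal_mult) (intro mult_left_mono SUP_upper; simp)
      finally show "ennreal (L2_set (y s) {..<N}) \<le> ennreal (\<rho> s) * Hm1_norm lam (x s)" .
    qed simp
    finally show ?thesis .
  qed
  then show ?thesis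
    unfolding Hm1_norm_eq_SUP_L2_set[OF lam] by (rule SUP_least)
qed

lemma has_integral_powr_to_endpoint:
  fixes \<beta> t c :: real
  assumes "0 \<le> \<beta>" "\<beta> < 1" "0 \<le> c"
  shows "((\<lambda>x. (t - x) powr (-\<beta>)) has_integral (c powr (1 - \<beta>) / (1 - \<beta>))) {t - c..t}"
proof -
  have "((\<lambda>x. x powr (-\<beta>)) has_integral (c powr (-\<beta> + 1) / (-\<beta> + 1))) {0..c}"
    by (rule has_integral_powr_from_0) (use assms in auto)
  then have "((\<lambda>x. (-x) powr (-\<beta>)) has_integral (c powr (1 - \<beta>) / (1 - \<beta>))) (cbox (-c) 0)"
    by (subst (asm) has_integral_reflect_real[symmetric]) (simp add: add.commute)
  from has_integral_affinity'[OF this, of 1 "-t"] show ?thesis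
    by simp
qed

lemma nn_integral_exp_decay:
  fixes lam s :: real
  assumes "0 < lam"
  shows "(\<integral>\<^sup>+x. ennreal (lam * exp (- lam * (x - s))) * indicator {s ..} x \<partial>lborel) = 1"
proof -
  have "(\<integral>\<^sup>+x. ennreal (lam * exp (- lam * (x - s))) * indicator {s ..} x \<partial>lborel)
      = ennreal (0 - (- exp (- lam * (s - s))))"
  proof (rule nn_integral_FTC_atLeast[where F="\<lambda>x. - exp (- lam * (x - s))" and T=0])
    show "((\<lambda>x. - exp (- lam * (x - s))) \<longlongrightarrow> 0) at_top"
      using assms by real_asymp
  qed (use assms in \<open>auto intro!: derivative_eq_intros\<close>)
  then show ?thesis
    by simp
qed

lemma heat_kernel_powr_le_midpoint_split:
  fixes \<beta> lam s t \<tau> :: real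
  assumes \<beta>: "0 \<le> \<beta>" and lam: "0 < lam" and \<tau>: "s < \<tau>" "\<tau> < t"
  defines "c \<equiv> (t - s) / 2"
  shows "lam * (t - \<tau>) powr (-\<beta>) * exp (- lam * (\<tau> - s))
     \<le> c powr (-\<beta>) * (lam * exp (- lam * (\<tau> - s)))
       + indicator {t - c..t} \<tau> * (lam * exp (- lam * c) * (t - \<tau>) powr (-\<beta>))"
proof (cases "\<tau> < t - c")
  case True
  have "0 < c"
    using \<tau> by (simp add: c_def)
  moreover have "c \<le> t - \<tau>"
    using True by simp
  ultimately have "(t - \<tau>) powr (-\<beta>) \<le> c powr (-\<beta>)"
    using \<beta> by (intro powr_mono2') auto
  then show ?thesis
    using lam True by (simp add: mult_right_mono)
next
  case False
  then have "c \<le> \<tau> - s"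
    by (simp add: c_def field_simps)
  then have "exp (- lam * (\<tau> - s)) \<le> exp (- lam * c)"
    using lam by simp
  from mult_left_mono[OF this, of "lam * (t - \<tau>) powr (-\<beta>)"]
  have "lam * (t - \<tau>) powr (-\<beta>) * exp (- lam * (\<tau> - s)) \<le> lam * exp (- lam * c) * (t - \<tau>) powr (-\<beta>)"
    using lam by (simp add: mult_ac)
  then show ?thesis
    using lam False \<tau> by (simp add: add_increasing)
qed

lemma powr_plus_exp_decay_le:
  fixes \<beta> lam c :: real
  assumes \<beta>: "0 \<le> \<beta>" "\<beta> < 1" and lam: "0 \<le> lam" and c: "0 < c"
  shows "c powr (-\<beta>) + lam * exp (- lam * c) * (c powr (1 - \<beta>) / (1 - \<beta>)) \<le> c powr (-\<beta>) * (1 + 1 / (1 - \<beta>))"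
proof -
  \<comment> \<open>The bound lam c exp (-lam c) \<le> 1 is what makes the kernel estimate uniform in lam.\<close>
  have "c powr (1 - \<beta>) = c * c powr (-\<beta>)"
    using c by (simp add: powr_diff powr_minus divide_inverse)
  then have "c powr (-\<beta>) + lam * exp (- lam * c) * (c powr (1 - \<beta>) / (1 - \<beta>))
      = c powr (-\<beta>) * (1 + lam * c * exp (- (lam * c)) / (1 - \<beta>))"
    by (simp add: field_simps)
  also have "lam * c \<le> exp (lam * c)"
    using exp_ge_add_one_self[of "lam * c"] by linarith
  then have "lam * c * exp (- (lam * c)) \<le> 1"
    by (simp add: exp_minus field_simps)
  then have "c powr (-\<beta>) * (1 + lam * c * exp (- (lam * c)) / (1 - \<beta>)) \<le> c powr (-\<beta>) * (1 + 1 / (1 - \<beta>))"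
    using \<beta> by (intro mult_left_mono add_left_mono divide_right_mono) auto
  finally show ?thesis .
qed

lemma nn_integral_heat_kernel_powr_le:
  fixes \<beta> lam s t :: real
  assumes \<beta>: "0 \<le> \<beta>" "\<beta> < 1" and lam: "0 < lam" and st: "s < t"
  shows "(\<integral>\<^sup>+\<tau>. ennreal (lam * (t - \<tau>) powr (-\<beta>) * exp (- lam * (\<tau> - s))) * indicator {s<..<t} \<tau> \<partial>lborel)
          \<le> ennreal (2 powr \<beta> * (1 + 1 / (1 - \<beta>)) * (t - s) powr (-\<beta>))"
proof -
  define c where "c = (t - s) / 2"
  define A where "A = c powr (-\<beta>)"
  define B where "B = lam * exp (- lam * c)"
  have c: "0 < c"
    using st by (simp add: c_def)
  have AB: "0 \<le> A" "0 \<le> B"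
    unfolding A_def B_def using lam by auto
  have "(\<integral>\<^sup>+\<tau>. ennreal (lam * (t - \<tau>) powr (-\<beta>) * exp (- lam * (\<tau> - s))) * indicator {s<..<t} \<tau> \<partial>lborel)
      \<le> (\<integral>\<^sup>+\<tau>. ennreal (A * (lam * exp (- lam * (\<tau> - s)))) * indicator {s..} \<tau>
         + ennreal (B * (t - \<tau>) powr (-\<beta>)) * indicator {t - c..t} \<tau> \<partial>lborel)"
  proof (intro nn_integral_mono)
    fix \<tau> :: real
    show "ennreal (lam * (t - \<tau>) powr (-\<beta>) * exp (- lam * (\<tau> - s))) * indicator {s<..<t} \<tau>
        \<le> ennreal (A * (lam * exp (- lam * (\<tau> - s)))) * indicator {s..} \<tau>
          + ennreal (B * (t - \<tau>) powr (-\<beta>)) * indicator {t - c..t} \<tau>"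
    proof (cases "\<tau> \<in> {s<..<t}")
      case True
      then have "ennreal (lam * (t - \<tau>) powr (-\<beta>) * exp (- lam * (\<tau> - s)))
          \<le> ennreal (A * (lam * exp (- lam * (\<tau> - s))) + indicator {t - c..t} \<tau> * (B * (t - \<tau>) powr (-\<beta>)))"
        using heat_kernel_powr_le_midpoint_split[OF \<beta>(1) lam, of s \<tau> t]
        by (intro ennreal_leI) (simp add: A_def B_def c_def mult.assoc)
      also have "\<dots> = ennreal (A * (lam * exp (- lam * (\<tau> - s)))) * indicator {s..} \<tau>
          + ennreal (B * (t - \<tau>) powr (-\<beta>)) * indicator {t - c..t} \<tau>"
        using True AB lam by (simp split: split_indicator)
      finally show ?thesis
        using True by simp
    qed simp
  qed
  also have "\<dots> = (\<integral>\<^sup>+\<tau>. ennreal (A * (lam * exp (- lam * (\<tau> - s)))) * indicator {s..} \<tau> \<partial>lborel)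
      + (\<integral>\<^sup>+\<tau>. ennreal (B * (t - \<tau>) powr (-\<beta>)) * indicator {t - c..t} \<tau> \<partial>lborel)"
    by (rule nn_integral_add) measurable
  also have "(\<integral>\<^sup>+\<tau>. ennreal (A * (lam * exp (- lam * (\<tau> - s)))) * indicator {s..} \<tau> \<partial>lborel) = ennreal A"
    using AB nn_integral_exp_decay[OF lam, of s] by (simp add: ennreal_mult' mult.assoc nn_integral_cmult)
  also have "(\<integral>\<^sup>+\<tau>. ennreal (B * (t - \<tau>) powr (-\<beta>)) * indicator {t - c..t} \<tau> \<partial>lborel)
      = ennreal (B * (c powr (1 - \<beta>) / (1 - \<beta>)))"
    using has_integral_mult_right[OF has_integral_powr_to_endpoint[OF \<beta> less_imp_le[OF c], of t], of B]
    by (intro nn_integral_has_integral_lebesgue') (use AB in auto)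
  also have "ennreal A + ennreal (B * (c powr (1 - \<beta>) / (1 - \<beta>))) = ennreal (A + B * (c powr (1 - \<beta>) / (1 - \<beta>)))"
    using AB \<beta> by (intro ennreal_plus[symmetric]) auto
  also have "\<dots> \<le> ennreal (A * (1 + 1 / (1 - \<beta>)))"
    using powr_plus_exp_decay_le[OF \<beta> less_imp_le[OF lam] c] by (intro ennreal_leI) (simp add: A_def B_def)
  also have "A * (1 + 1 / (1 - \<beta>)) = 2 powr \<beta> * (1 + 1 / (1 - \<beta>)) * (t - s) powr (-\<beta>)"
    using st by (simp add: A_def c_def powr_divide powr_minus field_simps)
  finally show ?thesis .
qed

lemma integral_right_quotient_tendsto_ae:
  fixes G :: "real \<Rightarrow> real"
  assumes G: "\<And>a b. G integrable_on {a..b}"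
  obtains N where "negligible N"
    "\<And>x. x \<notin> N \<Longrightarrow> ((\<lambda>h. integral {x..x + h} G / h) \<longlongrightarrow> G x) (at_right 0)"
proof -
  obtain N where N: "negligible N"
    and explicit: "\<And>x e. \<lbrakk>x \<notin> N; 0 < e\<rbrakk> \<Longrightarrow>
       \<exists>d>0. \<forall>h. 0 < h \<and> h < d \<longrightarrow> norm (integral (cbox x (x + h *\<^sub>R One)) G /\<^sub>R h ^ DIM(real) - G x) < e"
    using integrable_ccontinuous_explicit[of G] G by auto
  show ?thesis
  proof (rule that[OF N], rule tendstoI)
    fix x e :: real
    assume "x \<notin> N" "0 < e"
    then obtain d where "0 < d" "\<And>h. 0 < h \<Longrightarrow> h < d \<Longrightarrow> \<bar>integral {x..x + h} G / h - G x\<bar> < e"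
      using explicit[of x e] by (auto simp: divide_inverse_commute)
    then show "\<forall>\<^sub>F h in at_right 0. dist (integral {x..x + h} G / h) (G x) < e"
      unfolding eventually_at_right_field by (auto simp: dist_real_def)
  qed
qed

lemma integral_left_quotient_tendsto_ae:
  fixes G :: "real \<Rightarrow> real"
  assumes G: "\<And>a b. G integrable_on {a..b}"
  obtains N where "negligible N"
    "\<And>x. x \<notin> N \<Longrightarrow> ((\<lambda>h. integral {x - h..x} G / h) \<longlongrightarrow> G x) (at_right 0)"
proof -
  define G' where "G' = (\<lambda>y. G (- y))"
  have "G' integrable_on {a..b}" for a b
    using Henstock_Kurzweil_Integration.integrable_reflect_real[of G "-a" "-b"] G
    unfolding G'_def by simp
  then obtain N where N: "negligible N"
    and right: "\<And>x. x \<notin> N \<Longrightarrow> ((\<lambda>h. integral {x..x + h} G' / h) \<longlongrightarrow> G' x) (at_right 0)"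
    using integral_right_quotient_tendsto_ae by blast
  show ?thesis
  proof (rule that[of "uminus ` N"])
    show "negligible (uminus ` N)"
      using negligible_differentiable_image_negligible[OF order_refl N]
      by (auto simp: differentiable_on_def)
    fix x :: real
    assume "x \<notin> uminus ` N"
    then have "- x \<notin> N"
      by (auto simp: image_iff)
    moreover have "integral {- x..- x + h} G' = integral {x - h..x} G" for h
      using Henstock_Kurzweil_Integration.integral_reflect_real[where f=G and a="x - h" and b=x]
      by (simp add: G'_def)
    ultimately show "((\<lambda>h. integral {x - h..x} G / h) \<longlongrightarrow> G x) (at_right 0)"
      using right[of "- x"] by (simp add: G'_def)
  qed
qed

lemma indefinite_integral_has_real_derivative_ae:
  fixes G :: "real \<Rightarrow> real"
  assumes G: "\<And>a b. G integrable_on {a..b}"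
  obtains N where "negligible N"
    "\<And>x. x \<notin> N \<Longrightarrow> 0 < x \<Longrightarrow> ((\<lambda>y. integral {0..y} G) has_real_derivative G x) (at x)"
proof -
  obtain N1 where N1: "negligible N1"
    and right: "\<And>x. x \<notin> N1 \<Longrightarrow> ((\<lambda>h. integral {x..x + h} G / h) \<longlongrightarrow> G x) (at_right 0)"
    using integral_right_quotient_tendsto_ae[OF G] by blast
  obtain N2 where N2: "negligible N2"
    and left: "\<And>x. x \<notin> N2 \<Longrightarrow> ((\<lambda>h. integral {x - h..x} G / h) \<longlongrightarrow> G x) (at_right 0)"
    using integral_left_quotient_tendsto_ae[OF G] by blast
  show ?thesis
  proof (rule that[of "N1 \<union> N2"])
    show "negligible (N1 \<union> N2)"
      using N1 N2 by (rule negligible_Un)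
    fix x :: real
    assume x: "x \<notin> N1 \<union> N2" "0 < x"
    define F where "F = (\<lambda>y. integral {0..y} G)"
    have "((\<lambda>h. (F (x + h) - F x) / h) \<longlongrightarrow> G x) (at_right 0)"
    proof (rule Lim_transform_eventually[OF right])
      show "\<forall>\<^sub>F h in at_right 0. integral {x..x + h} G / h = (F (x + h) - F x) / h"
        unfolding eventually_at_right_field
      proof (intro exI[of _ 1] conjI allI impI)
        fix h :: real
        assume "0 < h" "h < 1"
        then have "integral {0..x} G + integral {x..x + h} G = integral {0..x + h} G"
          using x G by (intro Henstock_Kurzweil_Integration.integral_combine) auto
        then show "integral {x..x + h} G / h = (F (x + h) - F x) / h"
          by (simp add: F_def)
      qed simp
    qed (use x in auto)
    moreover have "((\<lambda>h. (F (x + h) - F x) / h) \<longlongrightarrow> G x) (at_left 0)"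
      unfolding filterlim_at_left_to_right minus_zero
    proof (rule Lim_transform_eventually[OF left])
      show "\<forall>\<^sub>F h in at_right 0. integral {x - h..x} G / h = (F (x + - h) - F x) / - h"
        unfolding eventually_at_right_field
      proof (intro exI[of _ x] conjI allI impI)
        fix h :: real
        assume "0 < h" "h < x"
        then have "integral {0..x - h} G + integral {x - h..x} G = integral {0..x} G"
          using G by (intro Henstock_Kurzweil_Integration.integral_combine) auto
        then show "integral {x - h..x} G / h = (F (x + - h) - F x) / - h"
          by (simp add: F_def minus_divide_left)
      qed (use x in auto)
    qed (use x in auto)
    ultimately have "((\<lambda>h. (F (x + h) - F x) / h) \<longlongrightarrow> G x) (at 0)"
      by (blast intro: filterlim_split_at)
    then show "(F has_real_derivative G x) (at x)"
      unfolding DERIV_def .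
  qed
qed

lemma abs_integral_le_nn_integral:
  fixes g :: "'a \<Rightarrow> real"
  shows "ennreal \<bar>integral\<^sup>L M g\<bar> \<le> (\<integral>\<^sup>+ x. ennreal \<bar>g x\<bar> \<partial>M)"
  using integral_norm_bound_ennreal[of M g] by (cases "integrable M g") (auto simp: not_integrable_integral_eq)

definition heat_conv_scalar :: "real \<Rightarrow> (real \<Rightarrow> real) \<Rightarrow> real \<Rightarrow> real" where
  "heat_conv_scalar lam u \<tau> = (LINT s:{0..\<tau>}|lebesgue. exp (- lam * (\<tau> - s)) * u s)"

lemma heat_conv_eq_heat_conv_scalar: "heat_conv lam w t k = heat_conv_scalar (lam k) (\<lambda>s. w s k) t"
  by (simp add: heat_conv_def heat_conv_scalar_def)

lemma abs_heat_conv_scalar_le: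
  "ennreal \<bar>heat_conv_scalar lam u \<tau>\<bar>
     \<le> (\<integral>\<^sup>+ s\<in>{0<..<\<tau>}. ennreal (exp (- lam * (\<tau> - s)) * \<bar>u s\<bar>) \<partial>lebesgue)"
proof -
  have "ennreal \<bar>heat_conv_scalar lam u \<tau>\<bar>
      \<le> (\<integral>\<^sup>+ s. ennreal \<bar>indicator {0..\<tau>} s *\<^sub>R (exp (- lam * (\<tau> - s)) * u s)\<bar> \<partial>lebesgue)"
    unfolding heat_conv_scalar_def set_lebesgue_integral_def by (rule abs_integral_le_nn_integral)
  also have "\<dots> = (\<integral>\<^sup>+ s\<in>{0<..<\<tau>}. ennreal (exp (- lam * (\<tau> - s)) * \<bar>u s\<bar>) \<partial>lebesgue)"
  proof (rule nn_integral_cong_AE)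
    have "{0, \<tau>} \<in> null_sets lebesgue"
      by (simp add: negligible_iff_null_sets[symmetric])
    from AE_not_in[OF this]
    show "AE s in lebesgue. ennreal \<bar>indicator {0..\<tau>} s *\<^sub>R (exp (- lam * (\<tau> - s)) * u s)\<bar>
        = ennreal (exp (- lam * (\<tau> - s)) * \<bar>u s\<bar>) * indicator {0<..<\<tau>} s"
      by eventually_elim (auto simp: abs_mult indicator_def)
  qed
  finally show ?thesis .
qed

lemma integrable_exp_mult_indicator:
  fixes u :: "real \<Rightarrow> real"
  assumes u: "set_integrable lebesgue {0..t} u"
  shows "integrable lebesgue (\<lambda>s. exp (lam * s) * (indicator {0..t} s *\<^sub>R u s))"
proof (rule Bochner_Integration.integrable_bound)
  show "integrable lebesgue (\<lambda>s. exp (\<bar>lam\<bar> * t) * (indicator {0..t} s *\<^sub>R u s))"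
    using u unfolding set_integrable_def by (rule integrable_mult_right)
  have [measurable]: "(\<lambda>s. indicator {0..t} s *\<^sub>R u s) \<in> borel_measurable lebesgue"
    using u unfolding set_integrable_def by (rule borel_measurable_integrable)
  have [measurable]: "(\<lambda>s::real. s) \<in> borel_measurable lebesgue"
    by (rule measurable_completion) simp
  show "(\<lambda>s. exp (lam * s) * (indicator {0..t} s *\<^sub>R u s)) \<in> borel_measurable lebesgue"
    by measurable
  have "exp (lam * s) \<le> exp (\<bar>lam\<bar> * t)" if "s \<in> {0..t}" for s
    using that by (auto intro: order_trans[OF abs_ge_self] mult_mono simp: abs_mult)
  then show "AE s in lebesgue. norm (exp (lam * s) * (indicator {0..t} s *\<^sub>R u s))
      \<le> norm (exp (\<bar>lam\<bar> * t) * (indicator {0..t} s *\<^sub>R u s))"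
    by (intro AE_I2) (auto simp: abs_mult indicator_def mult_right_mono)
qed

lemma heat_conv_scalar_eq_exp_mult_integral:
  fixes u :: "real \<Rightarrow> real"
  assumes u: "set_integrable lebesgue {0..t} u" and \<tau>: "\<tau> \<le> t"
  shows "heat_conv_scalar lam u \<tau>
    = exp (- lam * \<tau>) * integral {0..\<tau>} (\<lambda>s. exp (lam * s) * (indicator {0..t} s *\<^sub>R u s))"
proof -
  define G where "G = (\<lambda>s. exp (lam * s) * (indicator {0..t} s *\<^sub>R u s))"
  have "heat_conv_scalar lam u \<tau> = (LINT s:{0..\<tau>}|lebesgue. exp (- lam * \<tau>) * G s)"
    unfolding heat_conv_scalar_def using \<tau>
    by (intro set_lebesgue_integral_cong) (auto simp: G_def algebra_simps simp flip: exp_add)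
  also have "\<dots> = exp (- lam * \<tau>) * (LINT s:{0..\<tau>}|lebesgue. G s)"
    by (rule set_integral_mult_right)
  also have "(LINT s:{0..\<tau>}|lebesgue. G s) = integral {0..\<tau>} G"
    using integrable_mult_indicator[OF _ integrable_exp_mult_indicator[OF u], of "{0..\<tau>}" lam]
    by (intro set_lebesgue_integral_eq_integral(2)) (simp add: set_integrable_def G_def)
  finally show ?thesis
    by (simp add: G_def)
qed

lemma heat_conv_scalar_deriv_ae:
  fixes u :: "real \<Rightarrow> real"
  assumes u: "set_integrable lebesgue {0..t} u"
  shows "AE \<tau> in lebesgue. \<tau> \<in> {0<..<t} \<longrightarrow>
           deriv (heat_conv_scalar lam u) \<tau> = u \<tau> - lam * heat_conv_scalar lam u \<tau>"
proof -
  define G where "G = (\<lambda>s. exp (lam * s) * (indicator {0..t} s *\<^sub>R u s))"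
  have "G integrable_on {a..b}" for a b
    using integrable_on_subcbox[OF integrable_on_lebesgue[OF integrable_exp_mult_indicator[OF u, of lam]], of a b]
    by (simp add: G_def)
  then obtain N where N: "negligible N"
    and dN: "\<And>x. x \<notin> N \<Longrightarrow> 0 < x \<Longrightarrow> ((\<lambda>y. integral {0..y} G) has_real_derivative G x) (at x)"
    using indefinite_integral_has_real_derivative_ae by blast
  have conv_eq: "heat_conv_scalar lam u \<tau> = exp (- lam * \<tau>) * integral {0..\<tau>} G" if "\<tau> \<in> {0<..<t}" for \<tau>
    using heat_conv_scalar_eq_exp_mult_integral[OF u, of \<tau> lam] that by (simp add: G_def)
  have "deriv (heat_conv_scalar lam u) \<tau> = u \<tau> - lam * heat_conv_scalar lam u \<tau>"
    if \<tau>: "\<tau> \<in> {0<..<t}" "\<tau> \<notin> N" for \<tau>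
  proof -
    have "((\<lambda>y. exp (- lam * y) * integral {0..y} G) has_real_derivative
            exp (- lam * \<tau>) * (- lam) * integral {0..\<tau>} G + G \<tau> * exp (- lam * \<tau>)) (at \<tau>)"
      using dN[of \<tau>] \<tau> by (auto intro!: derivative_eq_intros)
    then have "(heat_conv_scalar lam u has_real_derivative
            exp (- lam * \<tau>) * (- lam) * integral {0..\<tau>} G + G \<tau> * exp (- lam * \<tau>)) (at \<tau>)"
      by (rule has_field_derivative_transform_within_open[of _ _ _ "{0<..<t}"]) (use \<tau> conv_eq in auto)
    then show ?thesis
      using conv_eq[OF \<tau>(1)] \<tau>(1)
      by (simp add: DERIV_imp_deriv G_def algebra_simps flip: exp_add)
  qed
  moreover have "AE \<tau> in lebesgue. \<tau> \<notin> N"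
    using N by (intro AE_not_in) (simp add: negligible_iff_null_sets)
  ultimately show ?thesis
    by auto
qed

lemma abs_caputo_le:
  assumes "0 < \<beta>" "\<beta> < 1"
  shows "ennreal \<bar>caputo \<beta> f t\<bar>
     \<le> ennreal (1 / Gamma (1 - \<beta>))
        * (\<integral>\<^sup>+ \<tau>\<in>{0<..<t}. ennreal ((t - \<tau>) powr (-\<beta>) * \<bar>deriv f \<tau>\<bar>) \<partial>lebesgue)"
proof -
  have \<Gamma>: "0 < Gamma (1 - \<beta>)"
    using assms by simp
  have "ennreal \<bar>caputo \<beta> f t\<bar> = ennreal (1 / Gamma (1 - \<beta>))
      * ennreal \<bar>LINT \<tau>:{0..t}|lebesgue. (t - \<tau>) powr (-\<beta>) * deriv f \<tau>\<bar>"
    using assms \<Gamma> by (simp add: caputo_def abs_mult flip: ennreal_mult)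
  also have "\<dots> \<le> ennreal (1 / Gamma (1 - \<beta>))
      * (\<integral>\<^sup>+ \<tau>. ennreal \<bar>indicator {0..t} \<tau> *\<^sub>R ((t - \<tau>) powr (-\<beta>) * deriv f \<tau>)\<bar> \<partial>lebesgue)"
    unfolding set_lebesgue_integral_def by (intro mult_left_mono abs_integral_le_nn_integral) simp
  also have "(\<integral>\<^sup>+ \<tau>. ennreal \<bar>indicator {0..t} \<tau> *\<^sub>R ((t - \<tau>) powr (-\<beta>) * deriv f \<tau>)\<bar> \<partial>lebesgue)
      = (\<integral>\<^sup>+ \<tau>\<in>{0<..<t}. ennreal ((t - \<tau>) powr (-\<beta>) * \<bar>deriv f \<tau>\<bar>) \<partial>lebesgue)"
  proof (rule nn_integral_cong_AE)
    have "{0, t} \<in> null_sets lebesgue"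
      by (simp add: negligible_iff_null_sets[symmetric])
    from AE_not_in[OF this]
    show "AE \<tau> in lebesgue. ennreal \<bar>indicator {0..t} \<tau> *\<^sub>R ((t - \<tau>) powr (-\<beta>) * deriv f \<tau>)\<bar>
        = ennreal ((t - \<tau>) powr (-\<beta>) * \<bar>deriv f \<tau>\<bar>) * indicator {0<..<t} \<tau>"
      by eventually_elim (auto simp: abs_mult indicator_def)
  qed
  finally show ?thesis .
qed

lemma nn_integral_heat_kernel_indicator_le:
  fixes \<beta> lam s t :: real
  assumes \<beta>: "0 \<le> \<beta>" "\<beta> < 1" and lam: "0 < lam"
  shows "(\<integral>\<^sup>+ \<tau>. (if 0 < s \<and> s < \<tau> \<and> \<tau> < t
             then ennreal (lam * (t - \<tau>) powr (-\<beta>) * exp (- lam * (\<tau> - s))) else 0) \<partial>lborel)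
     \<le> ennreal (2 powr \<beta> * (1 + 1 / (1 - \<beta>)) * (t - s) powr (-\<beta>)) * indicator {0<..<t} s"
proof (cases "s \<in> {0<..<t}")
  case True
  then have "(\<integral>\<^sup>+ \<tau>. (if 0 < s \<and> s < \<tau> \<and> \<tau> < t
             then ennreal (lam * (t - \<tau>) powr (-\<beta>) * exp (- lam * (\<tau> - s))) else 0) \<partial>lborel)
      = (\<integral>\<^sup>+ \<tau>. ennreal (lam * (t - \<tau>) powr (-\<beta>) * exp (- lam * (\<tau> - s))) * indicator {s<..<t} \<tau> \<partial>lborel)"
    by (intro nn_integral_cong) (auto split: split_indicator)
  also have "\<dots> \<le> ennreal (2 powr \<beta> * (1 + 1 / (1 - \<beta>)) * (t - s) powr (-\<beta>))"
    using True by (intro nn_integral_heat_kernel_powr_le \<beta> lam) auto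
  finally show ?thesis
    using True by simp
next
  case False
  then have "(\<lambda>\<tau>. if 0 < s \<and> s < \<tau> \<and> \<tau> < t
      then ennreal (lam * (t - \<tau>) powr (-\<beta>) * exp (- lam * (\<tau> - s))) else 0) = (\<lambda>\<tau>. 0)"
    by (auto simp: fun_eq_iff)
  then show ?thesis
    by simp
qed

lemma nn_integral_heat_kernel_swap_le:
  fixes \<beta> lam t :: real and a :: "real \<Rightarrow> real"
  assumes \<beta>: "0 \<le> \<beta>" "\<beta> < 1" and lam: "0 < lam" and a[measurable]: "a \<in> borel_measurable borel"
  shows "(\<integral>\<^sup>+ \<tau>\<in>{0<..<t}. ennreal (lam * (t - \<tau>) powr (-\<beta>))
            * (\<integral>\<^sup>+ s\<in>{0<..<\<tau>}. ennreal (exp (- lam * (\<tau> - s)) * \<bar>a s\<bar>) \<partial>lebesgue) \<partial>lebesgue)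
     \<le> ennreal (2 powr \<beta> * (1 + 1 / (1 - \<beta>)))
        * (\<integral>\<^sup>+ s\<in>{0<..<t}. ennreal ((t - s) powr (-\<beta>) * \<bar>a s\<bar>) \<partial>lebesgue)"
proof -
  define K where "K = 2 powr \<beta> * (1 + 1 / (1 - \<beta>))"
  have K: "0 \<le> K"
    using \<beta> by (simp add: K_def)
  define k where "k \<tau> s = (if 0 < s \<and> s < \<tau> \<and> \<tau> < t
      then ennreal (lam * (t - \<tau>) powr (-\<beta>) * exp (- lam * (\<tau> - s))) else 0)" for \<tau> s
  have [measurable]: "(\<lambda>(\<tau>, s). k \<tau> s) \<in> borel_measurable (lborel \<Otimes>\<^sub>M lborel)"
    unfolding k_def by measurable
  have "(\<integral>\<^sup>+ \<tau>\<in>{0<..<t}. ennreal (lam * (t - \<tau>) powr (-\<beta>))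
            * (\<integral>\<^sup>+ s\<in>{0<..<\<tau>}. ennreal (exp (- lam * (\<tau> - s)) * \<bar>a s\<bar>) \<partial>lebesgue) \<partial>lebesgue)
      = (\<integral>\<^sup>+ \<tau>. (\<integral>\<^sup>+ s. k \<tau> s * ennreal \<bar>a s\<bar> \<partial>lborel) \<partial>lborel)"
    unfolding nn_integral_completion
  proof (intro nn_integral_cong)
    fix \<tau> :: real
    have "ennreal (lam * (t - \<tau>) powr (-\<beta>)) * (\<integral>\<^sup>+ s\<in>{0<..<\<tau>}. ennreal (exp (- lam * (\<tau> - s)) * \<bar>a s\<bar>) \<partial>lborel)
        = (\<integral>\<^sup>+ s. ennreal (lam * (t - \<tau>) powr (-\<beta>)) * (ennreal (exp (- lam * (\<tau> - s)) * \<bar>a s\<bar>) * indicator {0<..<\<tau>} s) \<partial>lborel)"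
      by (rule nn_integral_cmult[symmetric]) measurable
    moreover have "k \<tau> = (\<lambda>s. 0)" if "\<tau> \<notin> {0<..<t}"
      using that by (auto simp: k_def fun_eq_iff)
    ultimately show "ennreal (lam * (t - \<tau>) powr (-\<beta>))
        * (\<integral>\<^sup>+ s\<in>{0<..<\<tau>}. ennreal (exp (- lam * (\<tau> - s)) * \<bar>a s\<bar>) \<partial>lborel) * indicator {0<..<t} \<tau>
      = (\<integral>\<^sup>+ s. k \<tau> s * ennreal \<bar>a s\<bar> \<partial>lborel)"
      using lam by (cases "\<tau> \<in> {0<..<t}")
        (auto simp: k_def ennreal_mult[symmetric] mult_ac intro!: nn_integral_cong split: split_indicator)
  qed
  also have "\<dots> = (\<integral>\<^sup>+ s. (\<integral>\<^sup>+ \<tau>. k \<tau> s \<partial>lborel) * ennreal \<bar>a s\<bar> \<partial>lborel)"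
    by (subst lborel_pair.Fubini') (measurable, simp add: nn_integral_multc)
  also have "\<dots> \<le> (\<integral>\<^sup>+ s. ennreal K * (ennreal ((t - s) powr (-\<beta>) * \<bar>a s\<bar>) * indicator {0<..<t} s) \<partial>lborel)"
  proof (intro nn_integral_mono)
    fix s :: real
    have "(\<integral>\<^sup>+ \<tau>. k \<tau> s \<partial>lborel) * ennreal \<bar>a s\<bar>
        \<le> ennreal (K * (t - s) powr (-\<beta>)) * indicator {0<..<t} s * ennreal \<bar>a s\<bar>"
      unfolding k_def K_def by (intro mult_right_mono nn_integral_heat_kernel_indicator_le \<beta> lam) auto
    also have "\<dots> = ennreal K * (ennreal ((t - s) powr (-\<beta>) * \<bar>a s\<bar>) * indicator {0<..<t} s)"
      using K by (simp add: ennreal_mult mult_ac)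
    finally show "(\<integral>\<^sup>+ \<tau>. k \<tau> s \<partial>lborel) * ennreal \<bar>a s\<bar>
        \<le> ennreal K * (ennreal ((t - s) powr (-\<beta>) * \<bar>a s\<bar>) * indicator {0<..<t} s)" .
  qed
  also have "\<dots> = ennreal K * (\<integral>\<^sup>+ s\<in>{0<..<t}. ennreal ((t - s) powr (-\<beta>) * \<bar>a s\<bar>) \<partial>lebesgue)"
    unfolding nn_integral_completion by (rule nn_integral_cmult) measurable
  finally show ?thesis
    unfolding K_def .
qed

lemma set_integrable_of_nn_integral_powr_weight:
  fixes u :: "real \<Rightarrow> real"
  assumes \<beta>: "0 \<le> \<beta>" and t: "0 < t" and u[measurable]: "u \<in> borel_measurable lebesgue"
    and finite: "(\<integral>\<^sup>+ s\<in>{0<..<t}. ennreal ((t - s) powr (-\<beta>) * \<bar>u s\<bar>) \<partial>lebesgue) < \<infinity>"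
  shows "set_integrable lebesgue {0..t} u"
proof -
  have [measurable]: "(\<lambda>s::real. s) \<in> borel_measurable lebesgue"
    by (rule measurable_completion) simp
  have "(\<integral>\<^sup>+ s. ennreal (norm (indicator {0..t} s *\<^sub>R u s)) \<partial>lebesgue)
      \<le> (\<integral>\<^sup>+ s. ennreal (t powr \<beta>) * (ennreal ((t - s) powr (-\<beta>) * \<bar>u s\<bar>) * indicator {0<..<t} s) \<partial>lebesgue)"
  proof (rule nn_integral_mono_AE)
    have "{0, t} \<in> null_sets lebesgue"
      by (simp add: negligible_iff_null_sets[symmetric])
    from AE_not_in[OF this]
    show "AE s in lebesgue. ennreal (norm (indicator {0..t} s *\<^sub>R u s))
        \<le> ennreal (t powr \<beta>) * (ennreal ((t - s) powr (-\<beta>) * \<bar>u s\<bar>) * indicator {0<..<t} s)"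
    proof eventually_elim
      case (elim s)
      show ?case
      proof (cases "s \<in> {0<..<t}")
        case True
        then have "t powr (-\<beta>) \<le> (t - s) powr (-\<beta>)"
          using \<beta> by (intro powr_mono2') auto
        then have "1 \<le> t powr \<beta> * (t - s) powr (-\<beta>)"
          using t by (simp add: powr_minus field_simps)
        from mult_right_mono[OF this abs_ge_zero[of "u s"]]
        show ?thesis
          using True by (simp add: ennreal_mult[symmetric] ennreal_leI mult.assoc)
      qed (use elim in auto)
    qed
  qed
  also have "\<dots> = ennreal (t powr \<beta>) * (\<integral>\<^sup>+ s\<in>{0<..<t}. ennreal ((t - s) powr (-\<beta>) * \<bar>u s\<bar>) \<partial>lebesgue)"
    by (rule nn_integral_cmult) measurable
  also have "\<dots> < \<infinity>"
    using finite by (simp add: ennreal_mult_less_top top.not_eq_extremum)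
  finally have "(\<integral>\<^sup>+ s. ennreal (norm (indicator {0..t} s *\<^sub>R u s)) \<partial>lebesgue) < \<infinity>" .
  then show ?thesis
    unfolding set_integrable_def by (rule integrableI_bounded[rotated]) measurable
qed

lemma abs_deriv_heat_conv_scalar_le_ae:
  assumes "set_integrable lebesgue {0..t} u"
  shows "AE \<tau> in lebesgue. \<tau> \<in> {0<..<t} \<longrightarrow> ennreal \<bar>deriv (heat_conv_scalar lam u) \<tau>\<bar>
           \<le> ennreal \<bar>u \<tau>\<bar> + ennreal \<bar>lam\<bar>
              * (\<integral>\<^sup>+ s\<in>{0<..<\<tau>}. ennreal (exp (- lam * (\<tau> - s)) * \<bar>u s\<bar>) \<partial>lebesgue)"
  using heat_conv_scalar_deriv_ae[OF assms, of lam]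
proof eventually_elim
  case (elim \<tau>)
  show ?case
  proof
    assume \<tau>: "\<tau> \<in> {0<..<t}"
    have "\<bar>deriv (heat_conv_scalar lam u) \<tau>\<bar> \<le> \<bar>u \<tau>\<bar> + \<bar>lam\<bar> * \<bar>heat_conv_scalar lam u \<tau>\<bar>"
      using elim \<tau> by (auto simp: abs_mult intro: abs_triangle_ineq4[THEN order_trans])
    then have "ennreal \<bar>deriv (heat_conv_scalar lam u) \<tau>\<bar>
        \<le> ennreal \<bar>u \<tau>\<bar> + ennreal \<bar>lam\<bar> * ennreal \<bar>heat_conv_scalar lam u \<tau>\<bar>"
      by (simp add: ennreal_leI flip: ennreal_plus ennreal_mult)
    also have "\<dots> \<le> ennreal \<bar>u \<tau>\<bar> + ennreal \<bar>lam\<bar>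
        * (\<integral>\<^sup>+ s\<in>{0<..<\<tau>}. ennreal (exp (- lam * (\<tau> - s)) * \<bar>u s\<bar>) \<partial>lebesgue)"
      by (intro add_left_mono mult_left_mono abs_heat_conv_scalar_le) auto
    finally show "ennreal \<bar>deriv (heat_conv_scalar lam u) \<tau>\<bar>
        \<le> ennreal \<bar>u \<tau>\<bar> + ennreal \<bar>lam\<bar>
          * (\<integral>\<^sup>+ s\<in>{0<..<\<tau>}. ennreal (exp (- lam * (\<tau> - s)) * \<bar>u s\<bar>) \<partial>lebesgue)" .
  qed
qed

lemma nn_integral_powr_abs_deriv_heat_conv_scalar_le:
  fixes u :: "real \<Rightarrow> real"
  assumes \<beta>: "0 \<le> \<beta>" "\<beta> < 1" and lam: "0 < lam"
    and u: "u \<in> borel_measurable lebesgue" and u_int: "set_integrable lebesgue {0..t} u"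
  shows "(\<integral>\<^sup>+ \<tau>\<in>{0<..<t}. ennreal ((t - \<tau>) powr (-\<beta>) * \<bar>deriv (heat_conv_scalar lam u) \<tau>\<bar>) \<partial>lebesgue)
     \<le> ennreal (1 + 2 powr \<beta> * (1 + 1 / (1 - \<beta>)))
        * (\<integral>\<^sup>+ s\<in>{0<..<t}. ennreal ((t - s) powr (-\<beta>) * \<bar>u s\<bar>) \<partial>lebesgue)"
proof -
  define K where "K = 2 powr \<beta> * (1 + 1 / (1 - \<beta>))"
  have K: "0 \<le> K"
    using \<beta> by (simp add: K_def)
  \<comment> \<open>Tonelli needs joint Borel measurability, so pass to a Borel representative of u.\<close>
  obtain a where a[measurable]: "a \<in> borel_measurable borel" and ua: "AE x in lebesgue. u x = a x"
    using completion_ex_borel_measurable_real[OF u] by (auto intro: AE_completion)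
  define Q where "Q = (\<integral>\<^sup>+ s\<in>{0<..<t}. ennreal ((t - s) powr (-\<beta>) * \<bar>a s\<bar>) \<partial>lebesgue)"
  define B where "B \<tau> = (\<integral>\<^sup>+ s\<in>{0<..<\<tau>}. ennreal (exp (- lam * (\<tau> - s)) * \<bar>a s\<bar>) \<partial>lebesgue)" for \<tau>
  have "B = (\<lambda>\<tau>. \<integral>\<^sup>+ s. (if 0 < s \<and> s < \<tau> then ennreal (exp (- lam * (\<tau> - s)) * \<bar>a s\<bar>) else 0) \<partial>lborel)"
    by (auto simp: B_def nn_integral_completion fun_eq_iff intro!: nn_integral_cong split: split_indicator)
  then have B_meas[measurable]: "B \<in> borel_measurable borel"
    by simp
  have "AE \<tau> in lebesgue.
      ennreal ((t - \<tau>) powr (-\<beta>) * \<bar>deriv (heat_conv_scalar lam u) \<tau>\<bar>) * indicator {0<..<t} \<tau>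
      \<le> ennreal ((t - \<tau>) powr (-\<beta>) * \<bar>a \<tau>\<bar>) * indicator {0<..<t} \<tau>
        + ennreal (lam * (t - \<tau>) powr (-\<beta>)) * B \<tau> * indicator {0<..<t} \<tau>"
    using abs_deriv_heat_conv_scalar_le_ae[OF u_int, of lam] ua
  proof eventually_elim
    case (elim \<tau>)
    have "(\<integral>\<^sup>+ s\<in>{0<..<\<tau>}. ennreal (exp (- lam * (\<tau> - s)) * \<bar>u s\<bar>) \<partial>lebesgue) = B \<tau>"
      unfolding B_def using ua by (intro nn_integral_cong_AE) auto
    then have "\<tau> \<in> {0<..<t} \<Longrightarrow> ennreal \<bar>deriv (heat_conv_scalar lam u) \<tau>\<bar> \<le> ennreal \<bar>a \<tau>\<bar> + ennreal lam * B \<tau>"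
      using elim lam by simp
    from mult_left_mono[OF this, of "ennreal ((t - \<tau>) powr (-\<beta>))"] show ?case
      using lam by (cases "\<tau> \<in> {0<..<t}") (simp_all add: distrib_left ennreal_mult mult_ac)
  qed
  then have "(\<integral>\<^sup>+ \<tau>\<in>{0<..<t}. ennreal ((t - \<tau>) powr (-\<beta>) * \<bar>deriv (heat_conv_scalar lam u) \<tau>\<bar>) \<partial>lebesgue)
      \<le> (\<integral>\<^sup>+ \<tau>. ennreal ((t - \<tau>) powr (-\<beta>) * \<bar>a \<tau>\<bar>) * indicator {0<..<t} \<tau>
        + ennreal (lam * (t - \<tau>) powr (-\<beta>)) * B \<tau> * indicator {0<..<t} \<tau> \<partial>lebesgue)"
    by (rule nn_integral_mono_AE)
  also have "\<dots> = Q + (\<integral>\<^sup>+ \<tau>\<in>{0<..<t}. ennreal (lam * (t - \<tau>) powr (-\<beta>)) * B \<tau> \<partial>lebesgue)"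
    unfolding Q_def nn_integral_completion by (rule nn_integral_add) measurable
  also have "\<dots> \<le> Q + ennreal K * Q"
    unfolding Q_def B_def K_def by (intro add_left_mono nn_integral_heat_kernel_swap_le \<beta> lam a)
  also have "\<dots> = ennreal (1 + K) * Q"
    using K by (simp add: distrib_right)
  also have "Q = (\<integral>\<^sup>+ s\<in>{0<..<t}. ennreal ((t - s) powr (-\<beta>) * \<bar>u s\<bar>) \<partial>lebesgue)"
    unfolding Q_def using ua by (intro nn_integral_cong_AE) auto
  finally show ?thesis
    unfolding K_def .
qed

definition caputo_heat_const :: "real \<Rightarrow> real" where
  "caputo_heat_const \<beta> = (1 + 2 powr \<beta> * (1 + 1 / (1 - \<beta>))) / Gamma (1 - \<beta>)"

lemma caputo_heat_const_pos:
  assumes "0 \<le> \<beta>" "\<beta> < 1"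
  shows "0 < caputo_heat_const \<beta>"
  using assms by (auto simp: caputo_heat_const_def intro!: divide_pos_pos add_pos_nonneg)

lemma abs_caputo_heat_conv_scalar_le:
  fixes u :: "real \<Rightarrow> real"
  assumes \<beta>: "0 < \<beta>" "\<beta> < 1" and lam: "0 < lam" and t: "0 < t"
    and u: "u \<in> borel_measurable lebesgue"
  shows "ennreal \<bar>caputo \<beta> (heat_conv_scalar lam u) t\<bar>
     \<le> ennreal (caputo_heat_const \<beta>) * (\<integral>\<^sup>+ s\<in>{0<..<t}. ennreal ((t - s) powr (-\<beta>) * \<bar>u s\<bar>) \<partial>lebesgue)"
proof (cases "(\<integral>\<^sup>+ s\<in>{0<..<t}. ennreal ((t - s) powr (-\<beta>) * \<bar>u s\<bar>) \<partial>lebesgue) = \<infinity>")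
  case True
  then show ?thesis
    using caputo_heat_const_pos[of \<beta>] \<beta> by (simp add: ennreal_mult_top)
next
  case False
  define K where "K = 2 powr \<beta> * (1 + 1 / (1 - \<beta>))"
  have "set_integrable lebesgue {0..t} u"
    using False \<beta> t u by (intro set_integrable_of_nn_integral_powr_weight) (auto simp: top.not_eq_extremum)
  then have "ennreal (1 / Gamma (1 - \<beta>))
      * (\<integral>\<^sup>+ \<tau>\<in>{0<..<t}. ennreal ((t - \<tau>) powr (-\<beta>) * \<bar>deriv (heat_conv_scalar lam u) \<tau>\<bar>) \<partial>lebesgue)
      \<le> ennreal (1 / Gamma (1 - \<beta>)) * ennreal (1 + K)
        * (\<integral>\<^sup>+ s\<in>{0<..<t}. ennreal ((t - s) powr (-\<beta>) * \<bar>u s\<bar>) \<partial>lebesgue)"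
    unfolding K_def mult.assoc using \<beta> lam u
    by (intro mult_left_mono nn_integral_powr_abs_deriv_heat_conv_scalar_le) auto
  also have "ennreal (1 / Gamma (1 - \<beta>)) * ennreal (1 + K) = ennreal (caputo_heat_const \<beta>)"
    using \<beta> Gamma_real_pos[of "1 - \<beta>"]
    by (subst ennreal_mult[symmetric]) (auto simp: caputo_heat_const_def K_def)
  finally show ?thesis
    using abs_caputo_le[OF \<beta>] by (rule order_trans[rotated])
qed

lemma caputo_heat_conv_scalar_cong:
  assumes "\<And>s. s \<in> {0..t} \<Longrightarrow> u s = v s"
  shows "caputo \<beta> (heat_conv_scalar lam u) t = caputo \<beta> (heat_conv_scalar lam v) t"
proof -
  have conv_eq: "heat_conv_scalar lam u \<tau> = heat_conv_scalar lam v \<tau>" if "\<tau> \<le> t" for \<tau>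
    unfolding heat_conv_scalar_def using assms that by (intro set_lebesgue_integral_cong) auto
  have "deriv (heat_conv_scalar lam u) \<tau> = deriv (heat_conv_scalar lam v) \<tau>" if "\<tau> < t" for \<tau>
  proof (rule deriv_cong_ev)
    have "eventually (\<lambda>x. x \<in> {..<t}) (nhds \<tau>)"
      using that by (intro eventually_nhds_in_open) auto
    then show "\<forall>\<^sub>F x in nhds \<tau>. heat_conv_scalar lam u x = heat_conv_scalar lam v x"
      by eventually_elim (simp add: conv_eq)
  qed simp
  \<comment> \<open>At tau = t the Caputo integrand vanishes because 0 powr -beta = 0, so deriv is only
      compared on [0, t).\<close>
  then show ?thesis
    unfolding caputo_def using conv_eq[of t]
    by (auto intro!: set_lebesgue_integral_cong simp: order_le_less)
qed

lemma abs_caputo_heat_conv_scalar_le_lebesgue_on: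
  fixes u :: "real \<Rightarrow> real"
  assumes \<beta>: "0 \<le> \<beta>" "\<beta> < 1" and lam: "0 < lam" and t: "0 < t" "t < T"
    and u: "u \<in> borel_measurable (lebesgue_on {0<..<T})"
  shows "ennreal \<bar>caputo \<beta> (heat_conv_scalar lam u) t\<bar>
     \<le> ennreal (caputo_heat_const \<beta>) * (\<integral>\<^sup>+ s. ennreal ((t - s) powr (-\<beta>)) * ennreal \<bar>u s\<bar> \<partial>lebesgue_on {0<..<t})"
proof -
  \<comment> \<open>u is only measurable on (0, T), while heat_conv_scalar integrates over closed intervals
      that contain 0; v extends u by 0 outside [0, t] and is Lebesgue measurable on all of R.\<close>
  define v where "v s = (if s \<in> {0..t} then u s else 0)" for s
  have [measurable]: "(\<lambda>s. indicator {0<..<T} s *\<^sub>R u s) \<in> borel_measurable lebesgue"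
    using u by (subst borel_measurable_restrict_space_iff[symmetric]) auto
  have [measurable]: "(\<lambda>s::real. s) \<in> borel_measurable lebesgue"
    by (rule measurable_completion) simp
  \<comment> \<open>Naming u 0 keeps the measurability prover from trying to measure u itself.\<close>
  define c where "c = u 0"
  have "v = (\<lambda>s. if s = 0 then c else if s \<in> {0..t} then indicator {0<..<T} s *\<^sub>R u s else 0)"
    using t by (auto simp: v_def c_def fun_eq_iff)
  then have v_meas: "v \<in> borel_measurable lebesgue"
    by (simp only:) measurable
  have caputo_eq: "caputo \<beta> (heat_conv_scalar lam u) t = caputo \<beta> (heat_conv_scalar lam v) t"
    by (rule caputo_heat_conv_scalar_cong) (simp add: v_def)
  have rhs_eq: "(\<integral>\<^sup>+ s. ennreal ((t - s) powr (-\<beta>)) * ennreal \<bar>u s\<bar> \<partial>lebesgue_on {0<..<t})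
      = (\<integral>\<^sup>+ s\<in>{0<..<t}. ennreal ((t - s) powr (-\<beta>) * \<bar>v s\<bar>) \<partial>lebesgue)"
    by (subst nn_integral_restrict_space) (auto intro!: nn_integral_cong simp: v_def ennreal_mult indicator_def)
  show ?thesis
  proof (cases "\<beta> = 0")
    case True
    have "ennreal \<bar>heat_conv_scalar lam v t\<bar>
        \<le> (\<integral>\<^sup>+ s\<in>{0<..<t}. ennreal (exp (- lam * (t - s)) * \<bar>v s\<bar>) \<partial>lebesgue)"
      by (rule abs_heat_conv_scalar_le)
    also have "\<dots> \<le> (\<integral>\<^sup>+ s\<in>{0<..<t}. ennreal ((t - s) powr (-\<beta>) * \<bar>v s\<bar>) \<partial>lebesgue)"
      using lam True by (intro nn_integral_mono) (auto simp: indicator_def intro!: ennreal_leI mult_left_le_one_le)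
    also have "\<dots> \<le> ennreal (caputo_heat_const \<beta>) * \<dots>"
    proof -
      have "1 \<le> ennreal (caputo_heat_const \<beta>)"
        using True by (simp add: caputo_heat_const_def)
      from mult_right_mono[OF this zero_le] show ?thesis
        by simp
    qed
    finally show ?thesis
      unfolding caputo_eq rhs_eq unfolding caputo_def using True by simp
  next
    case False
    then show ?thesis
      unfolding caputo_eq rhs_eq using \<beta> lam t v_meas by (intro abs_caputo_heat_conv_scalar_le) auto
  qed
qed

theorem lemma3p5:
  fixes \<beta> :: real
  assumes "0 \<le> \<beta>" and "\<beta> < 1"
  shows "\<exists>C>0. \<forall>(lam :: nat \<Rightarrow> real) (T :: real) (w :: real \<Rightarrow> nat \<Rightarrow> real) (t :: real).
           (\<forall>k. lam k > 0) \<longrightarrow> mono lam \<longrightarrow> filterlim lam at_top sequentially \<longrightarrow>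
           L2_Hm1 T lam w \<longrightarrow> 0 < t \<longrightarrow> t < T \<longrightarrow>
           Hm1_norm lam (caputo_vec \<beta> (heat_conv lam w) t)
             \<le> ennreal C * (\<integral>\<^sup>+ s\<in>{0<..<t}. ennreal ((t - s) powr (- \<beta>)) * Hm1_norm lam (w s) \<partial>lebesgue)"
proof (intro exI[of _ "caputo_heat_const \<beta>"] conjI allI impI)
  show "0 < caputo_heat_const \<beta>"
    using assms by (rule caputo_heat_const_pos)
  fix lam :: "nat \<Rightarrow> real" and T t :: real and w :: "real \<Rightarrow> nat \<Rightarrow> real"
  assume lam: "\<forall>k. lam k > 0" and "mono lam" and "filterlim lam at_top sequentially"
    and w: "L2_Hm1 T lam w" and t: "0 < t" "t < T"
  have w_meas: "(\<lambda>s. w s k) \<in> borel_measurable (lebesgue_on {0<..<T})" for k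
    using w unfolding L2_Hm1_def by blast
  have "Hm1_norm lam (caputo_vec \<beta> (heat_conv lam w) t)
      \<le> ennreal (caputo_heat_const \<beta>)
        * (\<integral>\<^sup>+ s. ennreal ((t - s) powr (- \<beta>)) * Hm1_norm lam (w s) \<partial>lebesgue_on {0<..<t})"
  proof (rule Hm1_norm_le_nn_integral)
    show "(\<lambda>s. w s k) \<in> borel_measurable (lebesgue_on {0<..<t})" for k
      using t by (intro measurable_restrict_mono[OF w_meas]) auto
    show "(\<lambda>s. (t - s) powr (- \<beta>)) \<in> borel_measurable (lebesgue_on {0<..<t})"
      by (intro measurable_restrict_space1 measurable_completion) simp
    show "ennreal \<bar>caputo_vec \<beta> (heat_conv lam w) t k\<bar> \<le> ennreal (caputo_heat_const \<beta>)
        * (\<integral>\<^sup>+ s. ennreal ((t - s) powr (- \<beta>)) * ennreal \<bar>w s k\<bar> \<partial>lebesgue_on {0<..<t})" for k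
      unfolding caputo_vec_def heat_conv_eq_heat_conv_scalar
      using assms lam t w_meas by (intro abs_caputo_heat_conv_scalar_le_lebesgue_on) auto
  qed (use lam assms caputo_heat_const_pos in auto)
  also have "(\<integral>\<^sup>+ s. ennreal ((t - s) powr (- \<beta>)) * Hm1_norm lam (w s) \<partial>lebesgue_on {0<..<t})
      = (\<integral>\<^sup>+ s\<in>{0<..<t}. ennreal ((t - s) powr (- \<beta>)) * Hm1_norm lam (w s) \<partial>lebesgue)"
    by (rule nn_integral_restrict_space) simp
  finally show "Hm1_norm lam (caputo_vec \<beta> (heat_conv lam w) t)
      \<le> ennreal (caputo_heat_const \<beta>)
        * (\<integral>\<^sup>+ s\<in>{0<..<t}. ennreal ((t - s) powr (- \<beta>)) * Hm1_norm lam (w s) \<partial>lebesgue)" .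
qed

end
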